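(* Let $H$ be a Hermitian operator on $\mathcal H_a\otimes\mathcal H_b$ (finite-dimensional). Then $\mathcal C_{\rm P}^{1}(H)=\|H\|_\infty$ if and only if both the eigenspace of $H$ for its smallest eigenvalue and the eigenspace of $H$ for its largest eigenvalue contain a product vector $\ket{\phi}_a\otimes\ket{\psi}_b$.
   Context: For a density operator $\rho$ on $\mathcal H_a\otimes\mathcal H_b$, the parallel capacity is $\mathcal C_{\rm P}(\rho,H):=\max_{U_a,U_b}\mathrm{tr}[(U_a\otimes U_b)\rho(U_a\otimes U_b)^\dagger H]-\min_{U_a,U_b}\mathrm{tr}[(U_a\otimes U_b)\rho(U_a\otimes U_b)^\dagger H]$, where $U_a,U_b$ range over all unitaries on $\mathcal H_a$, $\mathcal H_b$ respectively. Let $\mathcal S^1$ be the set of separable density operators on $\mathcal H_a\otimes\mathcal H_b$, and $\mathcal C_{\rm P}^1(H):=\max_{\rho\in\mathcal S^1}\mathcal C_{\rm P}(\rho,H)$. With $E_0,E_{\max}$ the smallest and largest eigenvalues of $H$, $\|H\|_\infty:=E_{\max}-E_0$. *)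

theory Defs
  imports "HOL-Analysis.Analysis"
begin

text \<open>Operators on finite-dimensional Hilbert spaces are complex square matrices indexed by a
finite type; the bipartite space H_a tensor H_b is indexed by the product type.\<close>

definition cadj :: "complex^'n^'m \<Rightarrow> complex^'m^'n" where
  "cadj A = (\<chi> i j. cnj (A $ j $ i))"

definition hermitian :: "complex^'n^'n \<Rightarrow> bool" where
  "hermitian A \<longleftrightarrow> cadj A = A"

definition unitary :: "complex^'n^'n \<Rightarrow> bool" where
  "unitary U \<longleftrightarrow> U ** cadj U = mat 1 \<and> cadj U ** U = mat 1"

definition psd :: "complex^'n^'n \<Rightarrow> bool" where
  "psd A \<longleftrightarrow> hermitian A \<and> (\<forall>v::complex^'n. 0 \<le> Re (\<Sum>i\<in>UNIV. cnj (v $ i) * (A *v v) $ i))"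

definition density :: "complex^'n^'n \<Rightarrow> bool" where
  "density \<rho> \<longleftrightarrow> psd \<rho> \<and> trace \<rho> = 1"

definition kron :: "complex^'a^'a \<Rightarrow> complex^'b^'b \<Rightarrow> complex^('a\<times>'b)^('a\<times>'b)" where
  "kron A B = (\<chi> p q. A $ fst p $ fst q * B $ snd p $ snd q)"

definition tensor_vec :: "complex^'a \<Rightarrow> complex^'b \<Rightarrow> complex^('a\<times>'b)" where
  "tensor_vec \<phi> \<psi> = (\<chi> p. \<phi> $ fst p * \<psi> $ snd p)"

definition separable :: "(complex^('a::finite\<times>'b::finite)^('a\<times>'b)) set" where
  "separable = convex hull {kron \<rho>a \<rho>b | \<rho>a \<rho>b. density \<rho>a \<and> density \<rho>b}"

definition energy :: "complex^('a::finite\<times>'b::finite)^('a\<times>'b) \<Rightarrow> complex^('a\<times>'b)^('a\<times>'b)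
    \<Rightarrow> complex^'a^'a \<Rightarrow> complex^'b^'b \<Rightarrow> real" where
  "energy \<rho> H Ua Ub = Re (trace (kron Ua Ub ** \<rho> ** cadj (kron Ua Ub) ** H))"

text \<open>Parallel capacity (max/min over local unitaries; attained by compactness, written as SUP/INF).\<close>
definition capP :: "complex^('a::finite\<times>'b::finite)^('a\<times>'b) \<Rightarrow> complex^('a\<times>'b)^('a\<times>'b) \<Rightarrow> real" where
  "capP \<rho> H =
     (SUP U\<in>{(Ua,Ub). unitary Ua \<and> unitary Ub}. energy \<rho> H (fst U) (snd U))
   - (INF U\<in>{(Ua,Ub). unitary Ua \<and> unitary Ub}. energy \<rho> H (fst U) (snd U))"

definition capP1 :: "complex^('a::finite\<times>'b::finite)^('a\<times>'b) \<Rightarrow> real" where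
  "capP1 H = (SUP \<rho>\<in>separable. capP \<rho> H)"

definition real_eigenvalues :: "complex^'n^'n \<Rightarrow> real set" where
  "real_eigenvalues A = {r. \<exists>v. v \<noteq> 0 \<and> A *v v = of_real r *s v}"

definition E0 :: "complex^'n^'n \<Rightarrow> real" where
  "E0 A = Min (real_eigenvalues A)"

definition Emax :: "complex^'n^'n \<Rightarrow> real" where
  "Emax A = Max (real_eigenvalues A)"

definition opnorm_inf :: "complex^'n^'n \<Rightarrow> real" where
  "opnorm_inf A = Emax A - E0 A"

definition eigenspace :: "complex^'n^'n \<Rightarrow> real \<Rightarrow> (complex^'n) set" where
  "eigenspace A r = {v. A *v v = of_real r *s v}"

definition contains_product_vector :: "(complex^('a::finite\<times>'b::finite)) set \<Rightarrow> bool" where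
  "contains_product_vector S \<longleftrightarrow>
     (\<exists>(\<phi>::complex^'a) (\<psi>::complex^'b). \<phi> \<noteq> 0 \<and> \<psi> \<noteq> 0 \<and> tensor_vec \<phi> \<psi> \<in> S)"

end

theory Submission
  imports Defs
begin

text \<open>Local unitaries map a separable state to a mixture of pure product states, so every energy
  it can reach lies between the minimum and the maximum of the expectation of \<open>H\<close> over unit
  product vectors. Hence \<open>C_P^1(H)\<close> is bounded by the spread of \<open>H\<close> on product vectors, which is
  at most \<open>E_max - E_0\<close>; equality forces the extremal product vectors to attain the extreme
  Rayleigh quotients, and such vectors are eigenvectors. Conversely, if \<open>\<phi>\<^sub>0 \<otimes> \<psi>\<^sub>0\<close> and
  \<open>\<phi>\<^sub>1 \<otimes> \<psi>\<^sub>1\<close> are unit eigenvectors for \<open>E_0\<close> and \<open>E_max\<close>, local Householder reflections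
  carry \<open>\<phi>\<^sub>0\<close> to \<open>\<phi>\<^sub>1\<close> and \<open>\<psi>\<^sub>0\<close> to \<open>\<psi>\<^sub>1\<close> up to phases, so the pure product state of
  \<open>\<phi>\<^sub>0 \<otimes> \<psi>\<^sub>0\<close> already has capacity \<open>E_max - E_0\<close>.\<close>

section \<open>Inner products and quadratic forms\<close>

definition cinner :: "complex^'n \<Rightarrow> complex^'n \<Rightarrow> complex" where
  "cinner v w = (\<Sum>i\<in>UNIV. cnj (v $ i) * w $ i)"

definition quad_form :: "complex^'n^'n \<Rightarrow> complex^'n \<Rightarrow> real" where
  "quad_form A v = Re (cinner v (A *v v))"

definition outer_prod :: "complex^'n \<Rightarrow> complex^'n \<Rightarrow> complex^'n^'n" where
  "outer_prod v w = (\<chi> i j. v $ i * cnj (w $ j))"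

lemma cinner_add_left: "cinner (x + y) v = cinner x v + cinner y v"
  by (simp add: cinner_def distrib_right sum.distrib)

lemma cinner_add_right: "cinner v (x + y) = cinner v x + cinner v y"
  by (simp add: cinner_def distrib_left sum.distrib)

lemma cinner_diff_left: "cinner (x - y) v = cinner x v - cinner y v"
  by (simp add: cinner_def left_diff_distrib sum_subtractf)

lemma cinner_diff_right: "cinner v (x - y) = cinner v x - cinner v y"
  by (simp add: cinner_def right_diff_distrib sum_subtractf)

lemma cinner_scale_left: "cinner (c *s x) v = cnj c * cinner x v"
  by (simp add: cinner_def sum_distrib_left algebra_simps)

lemma cinner_scale_right: "cinner v (c *s x) = c * cinner v x"
  by (simp add: cinner_def sum_distrib_left algebra_simps)

lemma cnj_cinner: "cnj (cinner v w) = cinner w v"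
  by (simp add: cinner_def mult.commute)

lemma cinner_self: "cinner v v = of_real ((norm v)^2)"
proof -
  have "cinner v v = (\<Sum>i\<in>UNIV. of_real ((cmod (v $ i))^2))"
    unfolding cinner_def by (intro sum.cong refl) (metis complex_norm_square mult.commute)
  also have "\<dots> = of_real ((norm v)^2)"
    by (simp add: norm_vec_def L2_set_def sum_nonneg)
  finally show ?thesis .
qed

lemma cinner_self_eq_0_iff [simp]: "cinner v v = 0 \<longleftrightarrow> v = 0"
  by (simp add: cinner_self)

lemma mult_cnj_cmod: "z * cnj z = (of_real (cmod z))^2"
  by (metis complex_norm_square of_real_power)

lemma Re_mult_cnj: "Re (z * cnj z) = (cmod z)^2"
  by (metis complex_norm_square Re_complex_of_real)

lemma norm_scale_vec: "norm (c *s (v::complex^'n)) = cmod c * norm v"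
proof -
  have "(of_real ((norm (c *s v))^2) :: complex) = of_real ((cmod c * norm v)^2)"
    unfolding cinner_self[symmetric] cinner_scale_left cinner_scale_right
    by (simp add: cinner_self power_mult_distrib mult_cnj_cmod mult.assoc)
  then have "(norm (c *s v))^2 = (cmod c * norm v)^2"
    by (simp only: of_real_eq_iff)
  then show ?thesis by (simp add: power2_eq_iff_nonneg)
qed

lemma mat_vector_mult: "(mat c :: complex^'n^'n) *v x = c *s x"
  by (simp add: vec_eq_iff matrix_vector_mult_def mat_def if_distrib if_distribR cong: if_cong)

lemma axis_column: "((A::complex^'n^'m) *v axis i 1) $ j = A $ j $ i"
  by (simp add: matrix_vector_mult_def axis_def if_distrib if_distribR cong: if_cong)

lemma cinner_axis: "cinner (axis i 1) v = v $ i"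
  by (simp add: cinner_def axis_def if_distrib if_distribR cong: if_cong)

lemma cinner_matrix_vector: "cinner v ((A::complex^'n^'m) *v w) = cinner (cadj A *v v) w"
  unfolding cinner_def cadj_def matrix_vector_mult_def
  by (simp add: sum_distrib_left sum_distrib_right algebra_simps cnj_sum) (rule sum.swap)

lemma cadj_diff: "cadj (A - B) = cadj A - cadj B"
  by (simp add: cadj_def vec_eq_iff)

lemma cadj_uminus: "cadj (- A) = - cadj A"
  by (simp add: cadj_def vec_eq_iff)

lemma cadj_mat: "cadj (mat c :: complex^'n^'n) = mat (cnj c)"
  by (simp add: cadj_def vec_eq_iff mat_def)

lemma cadj_outer_prod: "cadj (outer_prod v w) = outer_prod w v"
  by (simp add: cadj_def outer_prod_def vec_eq_iff)

lemma outer_prod_vector_mult: "outer_prod v w *v x = cinner w x *s v"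
  by (simp add: outer_prod_def matrix_vector_mult_def cinner_def vec_eq_iff sum_distrib_left algebra_simps)

lemma hermitian_cinner: "hermitian A \<Longrightarrow> cinner v (A *v w) = cinner (A *v v) w"
  by (metis hermitian_def cinner_matrix_vector)

lemma hermitian_entry: "hermitian A \<Longrightarrow> A $ i $ j = cnj (A $ j $ i)"
  unfolding hermitian_def cadj_def by (metis vec_lambda_beta)

lemma hermitian_diag_real: "hermitian A \<Longrightarrow> A $ i $ i = of_real (Re (A $ i $ i))"
  by (metis Reals_cnj_iff complex_is_Real_iff hermitian_entry of_real_Re)

lemma hermitian_cinner_self: "hermitian A \<Longrightarrow> cinner v (A *v v) = of_real (quad_form A v)"
  unfolding quad_form_def
  by (metis Reals_cnj_iff cnj_cinner complex_is_Real_iff hermitian_cinner of_real_Re)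

lemma psd_iff_quad_form: "psd A \<longleftrightarrow> hermitian A \<and> (\<forall>v. 0 \<le> quad_form A v)"
  by (simp add: psd_def quad_form_def cinner_def)

lemma quad_form_scale: "quad_form A (c *s v) = (cmod c)^2 * quad_form A v"
proof -
  have "cinner (c *s v) (A *v (c *s v)) = of_real ((cmod c)^2) * cinner v (A *v v)"
    by (simp add: vector_scalar_commute cinner_scale_left cinner_scale_right
        mult.assoc[symmetric] mult.commute[of "cnj c"] mult_cnj_cmod)
  then show ?thesis by (simp add: quad_form_def del: of_real_power)
qed

lemma quad_form_uminus: "quad_form (- A) v = - quad_form A v"
  by (simp add: quad_form_def vec_eq_iff matrix_vector_mult_def cinner_def sum_negf)

lemma quad_form_shift: "quad_form (mat (of_real M) - A) v = M * (norm v)^2 - quad_form A v"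
  by (simp add: quad_form_def matrix_vector_mult_diff_rdistrib mat_vector_mult cinner_diff_right
      cinner_scale_right cinner_self)

lemma quad_form_eigenvector: "A *v v = of_real r *s v \<Longrightarrow> quad_form A v = r * (norm v)^2"
  by (simp add: quad_form_def cinner_scale_right cinner_self)

lemma quad_form_zero [simp]: "quad_form A 0 = 0"
  by (simp add: quad_form_def cinner_def)

lemma continuous_on_quad_form: "continuous_on S (quad_form A)"
  unfolding quad_form_def cinner_def matrix_vector_mult_def
  by (intro continuous_intros)

lemma hermitian_uminus: "hermitian A \<Longrightarrow> hermitian (- A)"
  by (simp add: hermitian_def cadj_uminus)

lemma uminus_matrix_vector_mult: "(- (A::complex^'n^'m)) *v v = - (A *v v)"
  by (simp add: vec_eq_iff matrix_vector_mult_def sum_negf[symmetric])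

lemma inner_eq_Re_cinner: "inner v w = Re (cinner v w)"
  by (simp add: inner_vec_def inner_complex_def cinner_def)

lemma quadratic_nonneg_imp_le:
  fixes a c q :: real
  assumes "0 \<le> a" "0 \<le> c" and nonneg: "\<And>t. 0 \<le> q - 2 * t * c + t^2 * a * c"
  shows "c \<le> a * q"
proof (cases "a = 0")
  case True
  have "c = 0"
  proof (rule ccontr)
    assume "c \<noteq> 0"
    then show False
      using nonneg[of "(q + 1) / (2 * c)"] True by (simp add: field_simps)
  qed
  then show ?thesis using True by simp
next
  case False
  then have "0 < a" using assms(1) by simp
  then show ?thesis
    using nonneg[of "1 / a"] by (simp add: field_simps power2_eq_square)
qed

lemma psd_cauchy_schwarz:
  assumes "psd A"
  shows "(cmod (cinner x (A *v w)))^2 \<le> quad_form A x * quad_form A w"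
proof -
  have h: "hermitian A" and nonneg: "\<And>v. 0 \<le> quad_form A v"
    using assms by (auto simp: psd_iff_quad_form)
  define b where "b = cinner x (A *v w)"
  have "0 \<le> quad_form A w - 2 * t * (cmod b)^2 + t^2 * quad_form A x * (cmod b)^2" for t
  proof -
    define s where "s = - of_real t * b"
    have "cinner (w + s *s x) (A *v (w + s *s x)) =
        cinner w (A *v w) + s * cinner w (A *v x) + cnj s * cinner x (A *v w) + cnj s * s * cinner x (A *v x)"
      by (simp add: matrix_vector_right_distrib vector_scalar_commute cinner_add_left cinner_add_right
          cinner_scale_left cinner_scale_right algebra_simps)
    also have "\<dots> = of_real (quad_form A w) + s * cnj b + cnj s * b + cnj s * s * of_real (quad_form A x)"
      using h by (simp add: hermitian_cinner_self b_def hermitian_cinner cnj_cinner)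
    finally have "quad_form A (w + s *s x) = quad_form A w + 2 * Re (s * cnj b) + (cmod s)^2 * quad_form A x"
      by (simp add: quad_form_def mult.commute[of "cnj s"] mult_cnj_cmod)
    moreover have "Re (s * cnj b) = - t * (cmod b)^2" "(cmod s)^2 = t^2 * (cmod b)^2"
      by (simp_all add: s_def mult.assoc mult_cnj_cmod norm_mult power_mult_distrib)
    ultimately have "quad_form A (w + s *s x) =
        quad_form A w - 2 * t * (cmod b)^2 + t^2 * quad_form A x * (cmod b)^2"
      by (simp add: algebra_simps)
    then show ?thesis using nonneg by metis
  qed
  then show ?thesis
    using quadratic_nonneg_imp_le nonneg by (simp add: b_def)
qed

lemma psd_kernel:
  assumes "psd A" "quad_form A v = 0"
  shows "A *v v = 0"
  using psd_cauchy_schwarz[OF assms(1), of "A *v v" v] assms(2) by simp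

section \<open>Extreme eigenvalues as extreme Rayleigh quotients\<close>

lemma scale_normalize:
  assumes "(v::complex^'n) \<noteq> 0"
  obtains u where "norm u = 1" "v = of_real (norm v) *s u"
proof
  show "norm (of_real (1 / norm v) *s v) = 1"
    using assms by (simp add: norm_scale_vec norm_divide)
  show "v = of_real (norm v) *s (of_real (1 / norm v) *s v)"
    using assms by (simp add: vector_smult_assoc)
qed

lemma quad_form_max_attained:
  fixes A :: "complex^'n^'n"
  obtains v0 where "norm v0 = 1" "\<And>v. quad_form A v \<le> quad_form A v0 * (norm v)^2"
proof -
  obtain v0 where v0: "v0 \<in> sphere 0 1" and max: "\<forall>u\<in>sphere 0 1. quad_form A u \<le> quad_form A v0"
    using continuous_attains_sup[of "sphere (0::complex^'n) 1" "quad_form A"]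
    by (auto simp: continuous_on_quad_form)
  have "quad_form A v \<le> quad_form A v0 * (norm v)^2" for v
  proof (cases "v = 0")
    case False
    then obtain u where u: "norm u = 1" "v = of_real (norm v) *s u"
      by (rule scale_normalize)
    then have "quad_form A v = (norm v)^2 * quad_form A u"
      by (metis quad_form_scale norm_of_real abs_norm_cancel)
    with max u(1) show ?thesis
      by (metis mult.commute mult_left_mono zero_le_power2 mem_sphere_0)
  qed simp
  with v0 that show thesis by simp
qed

lemma eigenvector_if_quad_form_attains_bound:
  assumes "hermitian A" "\<And>v. quad_form A v \<le> M * (norm v)^2" "quad_form A v0 = M * (norm v0)^2"
  shows "A *v v0 = of_real M *s v0"
proof -
  have "psd (mat (of_real M) - A)"
    using assms(1,2) by (simp add: psd_iff_quad_form quad_form_shift hermitian_def cadj_diff cadj_mat)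
  then have "(mat (of_real M) - A) *v v0 = 0"
    by (rule psd_kernel) (simp add: quad_form_shift assms(3))
  then show ?thesis
    by (simp add: matrix_vector_mult_diff_rdistrib mat_vector_mult)
qed

lemma hermitian_eigenvectors_orthogonal:
  assumes "hermitian A" "A *v v = of_real r *s v" "A *v w = of_real s *s w" "r \<noteq> s"
  shows "cinner v w = 0"
proof -
  have "of_real s * cinner v w = of_real r * cinner v w"
    using hermitian_cinner[OF assms(1), of v w] assms(2,3) by (simp add: cinner_scale_left cinner_scale_right)
  with assms(4) show ?thesis by simp
qed

lemma finite_real_eigenvalues:
  assumes "hermitian A"
  shows "finite (real_eigenvalues A)"
proof -
  define f where "f r = (SOME v. v \<noteq> 0 \<and> A *v v = of_real r *s v)" for r
  have f: "f r \<noteq> 0 \<and> A *v f r = of_real r *s f r" if "r \<in> real_eigenvalues A" for r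
    using someI_ex[of "\<lambda>v. v \<noteq> 0 \<and> A *v v = of_real r *s v"] that
    unfolding f_def real_eigenvalues_def by blast
  have orth: "cinner (f r) (f s) = 0"
    if "r \<in> real_eigenvalues A" "s \<in> real_eigenvalues A" "r \<noteq> s" for r s
    using hermitian_eigenvectors_orthogonal[OF assms] f that by blast
  have inj: "inj_on f (real_eigenvalues A)"
  proof (rule inj_onI, rule ccontr)
    fix r s assume "r \<in> real_eigenvalues A" "s \<in> real_eigenvalues A" "f r = f s" "r \<noteq> s"
    with orth f show False by (metis cinner_self_eq_0_iff)
  qed
  have "pairwise orthogonal (f ` real_eigenvalues A)"
  proof (rule pairwiseI, clarify)
    fix r s assume "r \<in> real_eigenvalues A" "s \<in> real_eigenvalues A" "f r \<noteq> f s"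
    then have "cinner (f r) (f s) = 0" using orth by blast
    then show "orthogonal (f r) (f s)" by (simp add: orthogonal_def inner_eq_Re_cinner)
  qed
  then show ?thesis
    using pairwise_orthogonal_imp_finite finite_imageD[OF _ inj] by blast
qed

lemma eigenvalue_le_quad_form_bound:
  assumes "A *v v = of_real r *s v" "v \<noteq> 0" "\<And>v. quad_form A v \<le> M * (norm v)^2"
  shows "r \<le> M"
proof -
  have "r * (norm v)^2 \<le> M * (norm v)^2"
    using assms(3)[of v] by (simp add: quad_form_eigenvector[OF assms(1)])
  with assms(2) show ?thesis by simp
qed

lemma max_quad_form_is_Emax:
  assumes "hermitian A" "norm v0 = 1" "\<And>v. quad_form A v \<le> quad_form A v0 * (norm v)^2"
  shows "quad_form A v0 \<in> real_eigenvalues A" "Emax A = quad_form A v0"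
proof -
  have "A *v v0 = of_real (quad_form A v0) *s v0"
    by (rule eigenvector_if_quad_form_attains_bound[OF assms(1,3)]) (simp add: assms(2))
  moreover have "v0 \<noteq> 0" using assms(2) by auto
  ultimately show in_eig: "quad_form A v0 \<in> real_eigenvalues A"
    unfolding real_eigenvalues_def by blast
  have "r \<le> quad_form A v0" if "r \<in> real_eigenvalues A" for r
    using that eigenvalue_le_quad_form_bound[OF _ _ assms(3)] unfolding real_eigenvalues_def by blast
  then show "Emax A = quad_form A v0"
    unfolding Emax_def using in_eig by (intro Max_eqI finite_real_eigenvalues assms(1))
qed

lemma quad_form_le_Emax:
  assumes "hermitian A"
  shows "quad_form A v \<le> Emax A * (norm v)^2"
proof -
  obtain v0 where "norm v0 = 1" "\<And>v. quad_form A v \<le> quad_form A v0 * (norm v)^2"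
    using quad_form_max_attained[of A] by blast
  with max_quad_form_is_Emax(2)[OF assms] show ?thesis by simp
qed

lemma real_eigenvalues_nonempty:
  assumes "hermitian A"
  shows "real_eigenvalues A \<noteq> {}"
proof -
  obtain v0 where "norm v0 = 1" "\<And>v. quad_form A v \<le> quad_form A v0 * (norm v)^2"
    using quad_form_max_attained[of A] by blast
  with max_quad_form_is_Emax(1)[OF assms] show ?thesis by blast
qed

lemma uminus_eigenvector_iff:
  "(- A) *v v = of_real r *s v \<longleftrightarrow> (A::complex^'n^'n) *v v = of_real (- r) *s v"
  unfolding uminus_matrix_vector_mult of_real_minus vector_smult_lneg by (metis minus_minus)

lemma mem_uminus_image: "(r::'a::group_add) \<in> uminus ` S \<longleftrightarrow> - r \<in> S"
  by (metis image_iff minus_minus)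

lemma real_eigenvalues_uminus: "real_eigenvalues (- A) = uminus ` real_eigenvalues A"
proof -
  have "r \<in> real_eigenvalues (- A) \<longleftrightarrow> r \<in> uminus ` real_eigenvalues A" for r
    unfolding mem_uminus_image real_eigenvalues_def mem_Collect_eq uminus_eigenvector_iff by simp
  then show ?thesis by blast
qed

lemma E0_eq_minus_Emax_uminus: "hermitian A \<Longrightarrow> E0 A = - Emax (- A)"
  unfolding E0_def Emax_def real_eigenvalues_uminus
  using minus_Max_eq_Min[of "uminus ` real_eigenvalues A"]
  by (simp add: finite_real_eigenvalues real_eigenvalues_nonempty image_image)

lemma E0_le_quad_form:
  assumes "hermitian A"
  shows "E0 A * (norm v)^2 \<le> quad_form A v"
  using quad_form_le_Emax[OF hermitian_uminus[OF assms], of v]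
  by (simp add: E0_eq_minus_Emax_uminus[OF assms] quad_form_uminus)

lemma eigenspace_Emax_if_quad_form_eq:
  assumes "hermitian A" "quad_form A v = Emax A * (norm v)^2"
  shows "v \<in> eigenspace A (Emax A)"
  unfolding eigenspace_def
  using eigenvector_if_quad_form_attains_bound[OF assms(1) quad_form_le_Emax[OF assms(1)] assms(2)]
  by simp

lemma eigenspace_E0_if_quad_form_eq:
  assumes "hermitian A" "quad_form A v = E0 A * (norm v)^2"
  shows "v \<in> eigenspace A (E0 A)"
proof -
  have "quad_form (- A) v = Emax (- A) * (norm v)^2"
    using assms by (simp add: quad_form_uminus E0_eq_minus_Emax_uminus)
  then have "v \<in> eigenspace (- A) (Emax (- A))"
    by (rule eigenspace_Emax_if_quad_form_eq[OF hermitian_uminus[OF assms(1)]])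
  then show ?thesis
    unfolding eigenspace_def mem_Collect_eq uminus_eigenvector_iff E0_eq_minus_Emax_uminus[OF assms(1)] .
qed

section \<open>Positive semidefinite matrices as sums of rank-one terms\<close>

lemma quad_form_axis: "quad_form A (axis i 1) = Re (A $ i $ i)"
  by (simp add: quad_form_def cinner_axis axis_column)

lemma psd_column_eq_0_if_diag_eq_0:
  assumes "psd A" "A $ i $ i = 0"
  shows "A $ j $ i = 0"
proof -
  have "A *v axis i 1 = 0"
    using assms by (intro psd_kernel) (simp_all add: quad_form_axis)
  then show ?thesis
    by (metis axis_column zero_index)
qed

lemma quad_form_minus_outer_prod:
  "quad_form (A - outer_prod c c) w = quad_form A w - (cmod (cinner c w))^2"
proof -
  have "cinner w (outer_prod c c *v w) = cinner c w * cnj (cinner c w)"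
    by (simp add: outer_prod_vector_mult cinner_scale_right cnj_cinner)
  then show ?thesis
    by (simp only: quad_form_def matrix_vector_mult_diff_rdistrib cinner_diff_right
        minus_complex.sel Re_mult_cnj)
qed

text \<open>One step of Cholesky elimination.\<close>
lemma psd_minus_column_outer_prod:
  assumes psd: "psd A" and pos: "0 < Re (A $ i $ i)"
  defines "c \<equiv> of_real (1 / sqrt (Re (A $ i $ i))) *s (A *v axis i 1)"
  shows "psd (A - outer_prod c c)" "(A - outer_prod c c) $ i $ i = 0"
    "\<And>j. A $ j $ j = 0 \<Longrightarrow> (A - outer_prod c c) $ j $ j = 0"
proof -
  define r where "r = Re (A $ i $ i)"
  have h: "hermitian A" and nonneg: "\<And>v. 0 \<le> quad_form A v"
    using psd by (auto simp: psd_iff_quad_form)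
  have Aii: "A $ i $ i = of_real r"
    unfolding r_def by (rule hermitian_diag_real[OF h])
  have "0 < r" using pos unfolding r_def .
  have c_entry: "c $ j = of_real (1 / sqrt r) * A $ j $ i" for j
    by (simp add: c_def r_def axis_column)
  have "0 \<le> quad_form (A - outer_prod c c) w" for w
  proof -
    have "cinner c w = of_real (1 / sqrt r) * cinner (axis i 1) (A *v w)"
      by (simp add: c_def r_def cinner_scale_left hermitian_cinner[OF h])
    then have "(cmod (cinner c w))^2 = (cmod (cinner (axis i 1) (A *v w)))^2 / r"
      using \<open>0 < r\<close> by (simp add: norm_divide power_divide)
    also have "\<dots> \<le> quad_form A w"
      using psd_cauchy_schwarz[OF psd, of "axis i 1" w] \<open>0 < r\<close>
      by (simp add: quad_form_axis r_def divide_le_eq mult.commute)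
    finally show ?thesis
      by (simp add: quad_form_minus_outer_prod)
  qed
  then show "psd (A - outer_prod c c)"
    using h by (simp add: psd_iff_quad_form hermitian_def cadj_diff cadj_outer_prod)
  have "c $ i = of_real (r / sqrt r)"
    by (simp add: c_entry Aii)
  also have "r / sqrt r = sqrt r"
    using \<open>0 < r\<close> by (simp add: field_simps)
  finally have "c $ i * cnj (c $ i) = of_real r"
    using \<open>0 < r\<close> by (simp flip: of_real_mult)
  then show "(A - outer_prod c c) $ i $ i = 0"
    by (simp add: outer_prod_def Aii)
  show "(A - outer_prod c c) $ j $ j = 0" if "A $ j $ j = 0" for j
    using psd_column_eq_0_if_diag_eq_0[OF psd that, of i] hermitian_entry[OF h, of j i] that
    by (simp add: outer_prod_def c_entry)
qed

lemma psd_sum_outer_prod: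
  assumes "psd A"
  shows "\<exists>(m::nat) c. A = (\<Sum>k<m. outer_prod (c k) (c k))"
  using assms
proof (induction "card {i. A $ i $ i \<noteq> 0}" arbitrary: A rule: less_induct)
  case less
  show ?case
  proof (cases "\<exists>i. A $ i $ i \<noteq> 0")
    case False
    then have "A = 0"
      using psd_column_eq_0_if_diag_eq_0[OF less.prems] by (auto simp: vec_eq_iff)
    then show ?thesis by (metis lessThan_0 sum.empty)
  next
    case True
    then obtain i where i: "A $ i $ i \<noteq> 0" by blast
    have h: "hermitian A" and nonneg: "\<And>v. 0 \<le> quad_form A v"
      using less.prems by (auto simp: psd_iff_quad_form)
    have "0 \<le> Re (A $ i $ i)"
      using nonneg[of "axis i 1"] by (simp add: quad_form_axis)
    moreover have "Re (A $ i $ i) \<noteq> 0"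
      using i hermitian_diag_real[OF h, of i] by (metis of_real_0)
    ultimately have pos: "0 < Re (A $ i $ i)" by simp
    define c where "c = of_real (1 / sqrt (Re (A $ i $ i))) *s (A *v axis i 1)"
    note step = psd_minus_column_outer_prod[OF less.prems pos, folded c_def]
    have "{j. (A - outer_prod c c) $ j $ j \<noteq> 0} \<subset> {j. A $ j $ j \<noteq> 0}"
      using step(2,3) i by blast
    then have "card {j. (A - outer_prod c c) $ j $ j \<noteq> 0} < card {j. A $ j $ j \<noteq> 0}"
      by (simp add: psubset_card_mono)
    then have "\<exists>(m::nat) d. A - outer_prod c c = (\<Sum>k<m. outer_prod (d k) (d k))"
      by (rule less.hyps[OF _ step(1)])
    then obtain m :: nat and d where d: "A - outer_prod c c = (\<Sum>k<m. outer_prod (d k) (d k))"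
      by blast
    define e where "e = d(m := c)"
    have "(\<Sum>k<m. outer_prod (e k) (e k)) = (\<Sum>k<m. outer_prod (d k) (d k))"
      by (intro sum.cong) (auto simp: e_def)
    then have "A = (\<Sum>k<Suc m. outer_prod (e k) (e k))"
      by (simp add: e_def flip: d)
    then show ?thesis by blast
  qed
qed

section \<open>Tensor products and energies\<close>

lemma trace_sum: "trace (sum f S) = (\<Sum>x\<in>S. trace (f x))"
  unfolding trace_def by (simp add: sum_component) (rule sum.swap)

lemma trace_outer_prod: "trace (outer_prod v v) = cinner v v"
  by (simp add: trace_def outer_prod_def cinner_def mult.commute)

lemma trace_scaleR: "trace ((c::real) *\<^sub>R (A::complex^'n^'n)) = c *\<^sub>R trace A"
  by (simp add: trace_def scaleR_sum_right)

lemma density_sum_outer_prod_norms: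
  assumes "density A" "A = (\<Sum>k<m. outer_prod (c k) (c k))"
  shows "(\<Sum>k<m. (norm (c k))^2) = 1"
proof -
  have "(of_real (\<Sum>k<m. (norm (c k))^2) :: complex) = trace A"
    by (simp only: assms(2) trace_sum trace_outer_prod cinner_self of_real_sum)
  with assms(1) show ?thesis
    by (simp only: density_def of_real_eq_1_iff)
qed

lemma unitary_norm:
  assumes "unitary U"
  shows "norm (U *v v) = norm v"
proof -
  have "cinner (U *v v) (U *v v) = cinner v v"
    using assms by (simp add: cinner_matrix_vector matrix_vector_mul_assoc unitary_def)
  then have "(norm (U *v v))^2 = (norm v)^2"
    by (simp only: cinner_self of_real_eq_iff)
  then show ?thesis by (simp add: power2_eq_iff_nonneg)
qed

lemma unitary_mat_1: "unitary (mat 1 :: complex^'n^'n)"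
  by (simp add: unitary_def cadj_mat)

lemma sum_UNIV_prod: "(\<Sum>i\<in>UNIV. \<Sum>j\<in>UNIV. f i j) = (\<Sum>p\<in>UNIV. f (fst p) (snd p))"
  by (simp add: sum.cartesian_product split_def)

lemma kron_tensor_vec: "kron A B *v tensor_vec x y = tensor_vec (A *v x) (B *v y)"
  by (simp add: kron_def tensor_vec_def matrix_vector_mult_def vec_eq_iff sum_product sum_UNIV_prod
      mult_ac)

lemma cinner_tensor_vec: "cinner (tensor_vec a b) (tensor_vec c d) = cinner a c * cinner b d"
  by (simp add: cinner_def tensor_vec_def sum_product sum_UNIV_prod mult_ac)

lemma norm_tensor_vec: "norm (tensor_vec a b) = norm a * norm b"
proof -
  have "(norm (tensor_vec a b))^2 = (norm a * norm b)^2"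
    using cinner_tensor_vec[of a b a b]
    by (simp only: cinner_self power_mult_distrib of_real_mult[symmetric] of_real_eq_iff)
  then show ?thesis by (simp add: power2_eq_iff_nonneg)
qed

lemma tensor_vec_scale: "tensor_vec (x *s a) (y *s b) = (x * y) *s tensor_vec a b"
  by (simp add: tensor_vec_def vec_eq_iff mult_ac)

lemma tensor_vec_zero_left [simp]: "tensor_vec 0 b = 0"
  by (simp add: tensor_vec_def vec_eq_iff)

lemma tensor_vec_zero_right [simp]: "tensor_vec a 0 = 0"
  by (simp add: tensor_vec_def vec_eq_iff)

lemma kron_outer_prod: "kron (outer_prod a a) (outer_prod b b) = outer_prod (tensor_vec a b) (tensor_vec a b)"
  by (simp add: kron_def outer_prod_def tensor_vec_def vec_eq_iff mult_ac)

lemma kron_sum_outer_prod: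
  "kron (\<Sum>k<m. outer_prod (c k) (c k)) (\<Sum>l<n. outer_prod (d l) (d l)) =
     (\<Sum>k<m. \<Sum>l<n. outer_prod (tensor_vec (c k) (d l)) (tensor_vec (c k) (d l)))"
  by (simp add: vec_eq_iff kron_def outer_prod_def tensor_vec_def sum_product mult_ac)

lemma matrix_add_rdistrib: "((A::complex^'n^'m) + B) ** C = A ** C + B ** C"
  by (simp add: matrix_matrix_mult_def vec_eq_iff distrib_right sum.distrib)

lemma sum_matrix_mult: "finite S \<Longrightarrow> sum f S ** (B::complex^'p^'n) = (\<Sum>x\<in>S. f x ** B)"
  by (induction S rule: finite_induct) (simp_all add: matrix_add_rdistrib)

lemma matrix_mult_sum: "finite S \<Longrightarrow> (B::complex^'n^'m) ** sum f S = (\<Sum>x\<in>S. B ** f x)"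
  by (induction S rule: finite_induct) (simp_all add: matrix_add_ldistrib)

lemma energy_sum: "finite S \<Longrightarrow> energy (sum f S) H Ua Ub = (\<Sum>x\<in>S. energy (f x) H Ua Ub)"
  by (simp add: energy_def sum_matrix_mult matrix_mult_sum trace_sum)

lemma energy_convex_comb:
  "energy (u *\<^sub>R x + v *\<^sub>R y) H Ua Ub = u * energy x H Ua Ub + v * energy y H Ua Ub"
  by (simp add: energy_def matrix_add_ldistrib matrix_add_rdistrib matrix_scalar_ac trace_add
      trace_scaleR flip: scalar_matrix_assoc)

lemma matrix_outer_prod_cadj: "K ** outer_prod v v ** cadj K = outer_prod (K *v v) (K *v v)"
  by (simp add: matrix_matrix_mult_def outer_prod_def matrix_vector_mult_def cadj_def vec_eq_iff
      sum_distrib_left sum_distrib_right mult_ac)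

lemma trace_outer_prod_mult: "trace (outer_prod v v ** H) = cinner v (H *v v)"
  unfolding trace_def outer_prod_def matrix_matrix_mult_def cinner_def matrix_vector_mult_def
  by (simp add: sum_distrib_left mult_ac) (rule sum.swap)

lemma energy_outer_prod: "energy (outer_prod v v) H Ua Ub = quad_form H (kron Ua Ub *v v)"
  by (simp add: energy_def quad_form_def matrix_outer_prod_cadj trace_outer_prod_mult)

section \<open>Energies of separable states\<close>

lemma tensor_vec_normalize:
  assumes "a \<noteq> 0" "b \<noteq> 0"
  obtains u w where "norm u = 1" "norm w = 1"
    "tensor_vec a b = of_real (norm a * norm b) *s tensor_vec u w"
proof -
  obtain u where u: "norm u = 1" "a = of_real (norm a) *s u"
    using scale_normalize[OF assms(1)] by blast
  obtain w where w: "norm w = 1" "b = of_real (norm b) *s w"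
    using scale_normalize[OF assms(2)] by blast
  have "tensor_vec a b = of_real (norm a * norm b) *s tensor_vec u w"
    by (subst u(2), subst w(2)) (simp add: tensor_vec_scale)
  with u(1) w(1) that show thesis by blast
qed

lemma quad_form_tensor_max_attained:
  fixes H :: "complex^('a::finite \<times> 'b::finite)^('a \<times> 'b)"
  obtains p0 :: "complex^'a" and q0 :: "complex^'b" where "norm p0 = 1" "norm q0 = 1"
    "\<And>p q. quad_form H (tensor_vec p q) \<le> quad_form H (tensor_vec p0 q0) * ((norm p)^2 * (norm q)^2)"
proof -
  define S where "S = sphere (0::complex^'a) 1 \<times> sphere (0::complex^'b) 1"
  define f where "f z = quad_form H (tensor_vec (fst z) (snd z))" for z
  have "continuous_on S f"
    unfolding f_def quad_form_def cinner_def matrix_vector_mult_def tensor_vec_def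
    by (intro continuous_intros)
  moreover have "compact S" "S \<noteq> {}"
    by (simp_all add: S_def compact_Times)
  ultimately obtain z0 where z0: "z0 \<in> S" and max: "\<And>z. z \<in> S \<Longrightarrow> f z \<le> f z0"
    using continuous_attains_sup[of S f] by blast
  have "quad_form H (tensor_vec p q) \<le> f z0 * ((norm p)^2 * (norm q)^2)" for p q
  proof (cases "p = 0 \<or> q = 0")
    case False
    then obtain u w where uw: "norm u = 1" "norm w = 1"
      "tensor_vec p q = of_real (norm p * norm q) *s tensor_vec u w"
      using tensor_vec_normalize by blast
    then have "quad_form H (tensor_vec p q) = ((norm p)^2 * (norm q)^2) * f (u, w)"
      by (simp add: f_def quad_form_scale power_mult_distrib norm_mult)
    moreover have "f (u, w) \<le> f z0"
      using max uw(1,2) by (simp add: S_def)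
    ultimately show ?thesis
      by (metis mult.commute mult_left_mono zero_le_mult_iff zero_le_power2)
  qed auto
  with z0 that show thesis
    by (auto simp: S_def f_def)
qed

lemma quad_form_tensor_min_attained:
  fixes H :: "complex^('a::finite \<times> 'b::finite)^('a \<times> 'b)"
  obtains p0 :: "complex^'a" and q0 :: "complex^'b" where "norm p0 = 1" "norm q0 = 1"
    "\<And>p q. quad_form H (tensor_vec p0 q0) * ((norm p)^2 * (norm q)^2) \<le> quad_form H (tensor_vec p q)"
proof -
  obtain p0 :: "complex^'a" and q0 :: "complex^'b" where "norm p0 = 1" "norm q0 = 1"
    "\<And>p q. quad_form (- H) (tensor_vec p q) \<le> quad_form (- H) (tensor_vec p0 q0) * ((norm p)^2 * (norm q)^2)"
    using quad_form_tensor_max_attained[of "- H"] by blast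
  with that show thesis
    by (simp add: quad_form_uminus)
qed

definition product_quad_form_bounds ::
    "real \<Rightarrow> real \<Rightarrow> complex^('a::finite \<times> 'b::finite)^('a \<times> 'b) \<Rightarrow> bool" where
  "product_quad_form_bounds Pl Ph H \<longleftrightarrow> (\<forall>(p::complex^'a) (q::complex^'b).
     Pl * ((norm p)^2 * (norm q)^2) \<le> quad_form H (tensor_vec p q) \<and>
     quad_form H (tensor_vec p q) \<le> Ph * ((norm p)^2 * (norm q)^2))"

lemma product_quad_form_bounds_exist:
  fixes H :: "complex^('a::finite \<times> 'b::finite)^('a \<times> 'b)"
  shows "\<exists>Pl Ph. product_quad_form_bounds Pl Ph H"
proof (rule quad_form_tensor_min_attained[of H], rule quad_form_tensor_max_attained[of H])
  fix p0 q0 p1 q1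
  assume lower: "\<And>p q. quad_form H (tensor_vec p0 q0) * ((norm p)^2 * (norm q)^2) \<le> quad_form H (tensor_vec p q)"
    and upper: "\<And>p q. quad_form H (tensor_vec p q) \<le> quad_form H (tensor_vec p1 q1) * ((norm p)^2 * (norm q)^2)"
  have "product_quad_form_bounds (quad_form H (tensor_vec p0 q0)) (quad_form H (tensor_vec p1 q1)) H"
    unfolding product_quad_form_bounds_def by (simp add: lower upper)
  then show ?thesis by blast
qed

lemma energy_kron_density_bounds:
  fixes H :: "complex^('a::finite \<times> 'b::finite)^('a \<times> 'b)"
  assumes "density A" "density B" "unitary Ua" "unitary Ub"
    and bounds: "product_quad_form_bounds Pl Ph H"
  shows "energy (kron A B) H Ua Ub \<in> {Pl..Ph}"
proof -
  have lower: "\<And>p q. Pl * ((norm p)^2 * (norm q)^2) \<le> quad_form H (tensor_vec (p::complex^'a) (q::complex^'b))"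
    and upper: "\<And>p q. quad_form H (tensor_vec (p::complex^'a) (q::complex^'b)) \<le> Ph * ((norm p)^2 * (norm q)^2)"
    using bounds by (simp_all add: product_quad_form_bounds_def)
  obtain m :: nat and c where c: "A = (\<Sum>k<m. outer_prod (c k) (c k))"
    using psd_sum_outer_prod[of A] assms(1) unfolding density_def by blast
  obtain n :: nat and d where d: "B = (\<Sum>l<n. outer_prod (d l) (d l))"
    using psd_sum_outer_prod[of B] assms(2) unfolding density_def by blast
  define x where "x k = (norm (Ua *v c k))^2" for k
  define y where "y l = (norm (Ub *v d l))^2" for l
  have x1: "(\<Sum>k<m. x k) = 1" and y1: "(\<Sum>l<n. y l) = 1"
    using density_sum_outer_prod_norms[OF assms(1) c] density_sum_outer_prod_norms[OF assms(2) d]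
    by (simp_all add: x_def y_def unitary_norm assms(3,4))
  have weights: "(\<Sum>k<m. \<Sum>l<n. P * (x k * y l)) = P" for P
  proof -
    have "(\<Sum>k<m. \<Sum>l<n. P * (x k * y l)) = (\<Sum>k<m. P * x k * (\<Sum>l<n. y l))"
      by (simp add: sum_distrib_left mult.assoc)
    also have "\<dots> = P" using x1 y1 by (simp flip: sum_distrib_left)
    finally show ?thesis .
  qed
  have energy: "energy (kron A B) H Ua Ub = (\<Sum>k<m. \<Sum>l<n. quad_form H (tensor_vec (Ua *v c k) (Ub *v d l)))"
    by (simp add: c d kron_sum_outer_prod energy_sum energy_outer_prod kron_tensor_vec)
  have "(\<Sum>k<m. \<Sum>l<n. Pl * (x k * y l)) \<le> energy (kron A B) H Ua Ub"
    unfolding energy x_def y_def by (intro sum_mono lower)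
  moreover have "energy (kron A B) H Ua Ub \<le> (\<Sum>k<m. \<Sum>l<n. Ph * (x k * y l))"
    unfolding energy x_def y_def by (intro sum_mono upper)
  ultimately show ?thesis
    by (simp add: weights)
qed

lemma energy_separable_bounds:
  fixes H :: "complex^('a::finite \<times> 'b::finite)^('a \<times> 'b)"
  assumes "\<rho> \<in> separable" "unitary Ua" "unitary Ub"
    and bounds: "product_quad_form_bounds Pl Ph H"
  shows "energy \<rho> H Ua Ub \<in> {Pl..Ph}"
proof -
  have "separable \<subseteq> {\<sigma>. energy \<sigma> H Ua Ub \<in> {Pl..Ph}}"
    unfolding separable_def
  proof (rule hull_minimal)
    show "{kron \<rho>a \<rho>b |\<rho>a \<rho>b. density \<rho>a \<and> density \<rho>b} \<subseteq> {\<sigma>. energy \<sigma> H Ua Ub \<in> {Pl..Ph}}"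
      using energy_kron_density_bounds[OF _ _ assms(2,3) bounds] by blast
    show "convex {\<sigma>. energy \<sigma> H Ua Ub \<in> {Pl..Ph}}"
      using convexD[OF convex_real_interval(5)[of Pl Ph]]
      by (simp add: convex_def energy_convex_comb del: atLeastAtMost_iff)
  qed
  with assms(1) show ?thesis by blast
qed

lemma local_unitaries_nonempty: "{(Ua :: complex^'a^'a, Ub :: complex^'b^'b). unitary Ua \<and> unitary Ub} \<noteq> {}"
proof -
  have "(mat 1, mat 1) \<in> {(Ua :: complex^'a^'a, Ub :: complex^'b^'b). unitary Ua \<and> unitary Ub}"
    by (simp add: unitary_mat_1)
  then show ?thesis by blast
qed

lemma capP_le:
  fixes H :: "complex^('a::finite \<times> 'b::finite)^('a \<times> 'b)"
  assumes "\<rho> \<in> separable"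
    and bounds: "product_quad_form_bounds Pl Ph H"
  shows "capP \<rho> H \<le> Ph - Pl"
proof -
  let ?U = "{(Ua :: complex^'a^'a, Ub :: complex^'b^'b). unitary Ua \<and> unitary Ub}"
  let ?e = "\<lambda>U. energy \<rho> H (fst U) (snd U)"
  have lo: "Pl \<le> ?e U" and hi: "?e U \<le> Ph" if "U \<in> ?U" for U
    using that energy_separable_bounds[OF assms(1) _ _ bounds] by (cases U, simp)+
  have "(SUP U\<in>?U. ?e U) \<le> Ph"
    by (rule cSUP_least[OF local_unitaries_nonempty hi])
  moreover have "Pl \<le> (INF U\<in>?U. ?e U)"
    by (rule cINF_greatest[OF local_unitaries_nonempty lo])
  ultimately show ?thesis
    unfolding capP_def by simp
qed

lemma energy_diff_le_capP:
  fixes H :: "complex^('a::finite \<times> 'b::finite)^('a \<times> 'b)"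
  assumes "\<rho> \<in> separable" "unitary Ua" "unitary Ub" "unitary Va" "unitary Vb"
  shows "energy \<rho> H Ua Ub - energy \<rho> H Va Vb \<le> capP \<rho> H"
proof -
  let ?U = "{(Ua :: complex^'a^'a, Ub :: complex^'b^'b). unitary Ua \<and> unitary Ub}"
  let ?e = "\<lambda>U. energy \<rho> H (fst U) (snd U)"
  obtain Pl Ph where bounds: "product_quad_form_bounds Pl Ph H"
    using product_quad_form_bounds_exist by blast
  have lo: "Pl \<le> ?e U" and hi: "?e U \<le> Ph" if "U \<in> ?U" for U
    using that energy_separable_bounds[OF assms(1) _ _ bounds] by (cases U, simp)+
  have "bdd_above (?e ` ?U)"
    by (rule bdd_aboveI2[OF hi])
  then have "?e (Ua, Ub) \<le> (SUP U\<in>?U. ?e U)"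
    by (rule cSUP_upper[rotated]) (simp add: assms(2,3))
  moreover have "bdd_below (?e ` ?U)"
    by (rule bdd_belowI2[OF lo])
  then have "(INF U\<in>?U. ?e U) \<le> ?e (Va, Vb)"
    by (rule cINF_lower) (simp add: assms(4,5))
  ultimately show ?thesis
    unfolding capP_def by simp
qed

lemma quad_form_outer_prod: "quad_form (outer_prod u u) v = (cmod (cinner u v))^2"
  using cnj_cinner[of u v, symmetric]
  by (simp only: quad_form_def outer_prod_vector_mult cinner_scale_right Re_mult_cnj)

lemma density_outer_prod: "norm u = 1 \<Longrightarrow> density (outer_prod u u)"
  by (simp add: density_def psd_iff_quad_form hermitian_def cadj_outer_prod quad_form_outer_prod
      trace_outer_prod cinner_self)

lemma outer_prod_tensor_vec_separable:
  assumes "norm a = 1" "norm b = 1"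
  shows "outer_prod (tensor_vec a b) (tensor_vec a b) \<in> separable"
  unfolding separable_def kron_outer_prod[symmetric]
  using assms by (intro hull_inc) (blast intro: density_outer_prod)

lemma separable_nonempty: "separable \<noteq> {}"
proof -
  obtain a :: "complex^'a" where "norm a = 1" using vector_choose_size[of 1] by auto
  moreover obtain b :: "complex^'b" where "norm b = 1" using vector_choose_size[of 1] by auto
  ultimately show ?thesis
    using outer_prod_tensor_vec_separable by blast
qed

lemma capP1_le:
  fixes H :: "complex^('a::finite \<times> 'b::finite)^('a \<times> 'b)"
  assumes "product_quad_form_bounds Pl Ph H"
  shows "capP1 H \<le> Ph - Pl"
  unfolding capP1_def
  using capP_le[OF _ assms] separable_nonempty by (intro cSUP_least) auto

lemma capP_le_capP1:
  fixes H :: "complex^('a::finite \<times> 'b::finite)^('a \<times> 'b)"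
  assumes "\<rho> \<in> separable"
  shows "capP \<rho> H \<le> capP1 H"
proof -
  obtain Pl Ph where bounds: "product_quad_form_bounds Pl Ph H"
    using product_quad_form_bounds_exist by blast
  have "bdd_above ((\<lambda>\<sigma>. capP \<sigma> H) ` separable)"
    by (rule bdd_aboveI2) (rule capP_le[OF _ bounds])
  with assms show ?thesis
    unfolding capP1_def by (rule cSUP_upper)
qed

section \<open>Local unitaries between product vectors\<close>

lemma unitary_if_hermitian_involution:
  assumes "hermitian R" "\<And>v. R *v (R *v v) = v"
  shows "unitary R"
proof -
  have "R ** R = mat 1"
    unfolding matrix_eq using assms(2) by (simp add: matrix_vector_mul_assoc)
  with assms(1) show ?thesis
    by (simp add: unitary_def hermitian_def)
qed

lemma unitary_reflection:
  fixes w :: "complex^'n"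
  assumes "w \<noteq> 0"
  defines "R \<equiv> mat 1 - outer_prod (of_real (2 / (norm w)^2) *s w) w"
  shows "unitary R" "\<And>v. R *v v = v - (of_real (2 / (norm w)^2) * cinner w v) *s w"
proof -
  define a :: complex where "a = of_real (2 / (norm w)^2)"
  have Ra: "R *v v = v - (a * cinner w v) *s w" for v
    by (simp add: R_def a_def matrix_vector_mult_diff_rdistrib outer_prod_vector_mult
        vector_smult_assoc mult.commute)
  then show "R *v v = v - (of_real (2 / (norm w)^2) * cinner w v) *s w" for v
    by (simp add: a_def)
  have "outer_prod w (a *s w) = outer_prod (a *s w) w"
    by (simp add: a_def outer_prod_def vec_eq_iff mult_ac)
  then have "hermitian R"
    by (simp add: R_def a_def hermitian_def cadj_diff cadj_mat cadj_outer_prod)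
  moreover have "R *v (R *v v) = v" for v
  proof -
    have "a * cinner w w = 2"
      using assms by (simp add: a_def cinner_self)
    then have "cinner w (R *v v) = - cinner w v"
      by (simp add: Ra cinner_diff_right cinner_scale_right mult.commute mult.left_commute)
    then show ?thesis
      by (simp add: Ra vector_smult_lneg)
  qed
  ultimately show "unitary R"
    by (rule unitary_if_hermitian_involution)
qed

lemma unitary_maps_unit_vector:
  fixes x y :: "complex^'n"
  assumes "norm x = 1" "norm y = 1"
  obtains U \<omega> where "unitary U" "U *v x = \<omega> *s y" "cmod \<omega> = 1"
proof -
  define g where "g = cinner y x"
  define \<omega> where "\<omega> = (if g = 0 then 1 else g / of_real (cmod g))"
  have \<omega>: "cmod \<omega> = 1"
    by (simp add: \<omega>_def norm_divide)
  define z where "z = \<omega> *s y"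
  \<comment> \<open>the phase \<open>\<omega>\<close> makes the overlap of \<open>z\<close> with \<open>x\<close> real and nonnegative\<close>
  have zx: "cinner z x = of_real (cmod g)"
  proof (cases "g = 0")
    case False
    then have "cnj g * g / of_real (cmod g) = of_real (cmod g)"
      by (simp add: mult.commute[of "cnj g"] mult_cnj_cmod power2_eq_square)
    with False show ?thesis
      by (simp add: z_def \<omega>_def cinner_scale_left g_def[symmetric])
  qed (simp add: z_def \<omega>_def cinner_scale_left g_def)
  show thesis
  proof (cases "x = z")
    case True
    with \<omega> that[OF unitary_mat_1, of \<omega>] show thesis by (simp add: z_def)
  next
    case False
    define w where "w = x - z"
    have xx: "cinner x x = 1" and zz: "cinner z z = 1"
      using assms \<omega> by (simp_all add: cinner_self z_def norm_scale_vec)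
    have xz: "cinner x z = of_real (cmod g)"
      using zx cnj_cinner[of z x] by simp
    have w_ne: "w \<noteq> 0" using False by (simp add: w_def)
    have "cinner w w = of_real (2 - 2 * cmod g)"
      by (simp add: w_def cinner_diff_left cinner_diff_right xx zz xz zx)
    then have nw: "(norm w)^2 = 2 - 2 * cmod g"
      by (metis cinner_self of_real_eq_iff)
    have "1 - cmod g \<noteq> 0"
      using nw w_ne by auto
    then have "2 / (norm w)^2 * (1 - cmod g) = 1"
      by (simp add: nw field_simps)
    moreover have "cinner w x = of_real (1 - cmod g)"
      by (simp add: w_def cinner_diff_left xx zx)
    ultimately have "of_real (2 / (norm w)^2) * cinner w x = 1"
      by (metis of_real_1 of_real_mult)
    then have "(mat 1 - outer_prod (of_real (2 / (norm w)^2) *s w) w) *v x = x - w"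
      by (simp only: unitary_reflection(2)[OF w_ne] vector_smult_lid)
    also have "x - w = \<omega> *s y"
      by (simp add: w_def z_def)
    finally have "(mat 1 - outer_prod (of_real (2 / (norm w)^2) *s w) w) *v x = \<omega> *s y" .
    with unitary_reflection(1)[OF w_ne] \<omega> that show thesis
      by blast
  qed
qed

section \<open>Product eigenvectors and the parallel capacity\<close>

lemma eigenspace_scale: "v \<in> eigenspace A r \<Longrightarrow> c *s v \<in> eigenspace A r"
  by (simp add: eigenspace_def vector_scalar_commute vector_smult_assoc mult.commute)

lemma unit_tensor_vec_in_eigenspace:
  assumes "a \<noteq> 0" "b \<noteq> 0" "tensor_vec a b \<in> eigenspace H r"
  obtains u w where "norm u = 1" "norm w = 1" "tensor_vec u w \<in> eigenspace H r"
proof -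
  obtain u w where uw: "norm u = 1" "norm w = 1"
    "tensor_vec a b = of_real (norm a * norm b) *s tensor_vec u w"
    using tensor_vec_normalize[OF assms(1,2)] by blast
  have "tensor_vec u w = of_real (1 / (norm a * norm b)) *s tensor_vec a b"
    using assms(1,2) by (simp add: uw(3) vector_smult_assoc)
  with eigenspace_scale[OF assms(3)] uw(1,2) that show thesis
    by metis
qed

lemma capP1_le_opnorm_inf:
  assumes "hermitian H"
  shows "capP1 H \<le> opnorm_inf H"
  unfolding opnorm_inf_def
proof (rule capP1_le)
  show "product_quad_form_bounds (E0 H) (Emax H) H"
    unfolding product_quad_form_bounds_def
  proof (intro allI conjI)
    fix p q
    show "E0 H * ((norm p)^2 * (norm q)^2) \<le> quad_form H (tensor_vec p q)"
      using E0_le_quad_form[OF assms, of "tensor_vec p q"] by (simp add: norm_tensor_vec power_mult_distrib)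
    show "quad_form H (tensor_vec p q) \<le> Emax H * ((norm p)^2 * (norm q)^2)"
      using quad_form_le_Emax[OF assms, of "tensor_vec p q"] by (simp add: norm_tensor_vec power_mult_distrib)
  qed
qed

lemma eigenvalue_gap_le_capP1:
  fixes H :: "complex^('a::finite \<times> 'b::finite)^('a \<times> 'b)"
  assumes "a0 \<noteq> 0" "b0 \<noteq> 0" "tensor_vec a0 b0 \<in> eigenspace H r0"
    and "a1 \<noteq> 0" "b1 \<noteq> 0" "tensor_vec a1 b1 \<in> eigenspace H r1"
  shows "r1 - r0 \<le> capP1 H"
proof -
  obtain u0 w0 where u0: "norm u0 = 1" "norm w0 = 1" "tensor_vec u0 w0 \<in> eigenspace H r0"
    using unit_tensor_vec_in_eigenspace[OF assms(1-3)] by blast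
  obtain u1 w1 where u1: "norm u1 = 1" "norm w1 = 1" "tensor_vec u1 w1 \<in> eigenspace H r1"
    using unit_tensor_vec_in_eigenspace[OF assms(4-6)] by blast
  obtain Ua \<omega>a where Ua: "unitary Ua" "Ua *v u0 = \<omega>a *s u1" "cmod \<omega>a = 1"
    using unitary_maps_unit_vector[OF u0(1) u1(1)] by blast
  obtain Ub \<omega>b where Ub: "unitary Ub" "Ub *v w0 = \<omega>b *s w1" "cmod \<omega>b = 1"
    using unitary_maps_unit_vector[OF u0(2) u1(2)] by blast
  define \<rho> where "\<rho> = outer_prod (tensor_vec u0 w0) (tensor_vec u0 w0)"
  have sep: "\<rho> \<in> separable"
    unfolding \<rho>_def by (rule outer_prod_tensor_vec_separable[OF u0(1,2)])
  have "energy \<rho> H (mat 1) (mat 1) = r0"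
    using quad_form_eigenvector[of H "tensor_vec u0 w0" r0] u0
    by (simp add: \<rho>_def energy_outer_prod kron_tensor_vec eigenspace_def norm_tensor_vec)
  moreover have "energy \<rho> H Ua Ub = r1"
    using quad_form_eigenvector[of H "tensor_vec u1 w1" r1] u1
    by (simp add: \<rho>_def energy_outer_prod kron_tensor_vec Ua(2,3) Ub(2,3) tensor_vec_scale
        quad_form_scale norm_mult eigenspace_def norm_tensor_vec)
  ultimately have "r1 - r0 \<le> capP \<rho> H"
    using energy_diff_le_capP[OF sep Ua(1) Ub(1) unitary_mat_1 unitary_mat_1, where H = H] by simp
  also have "\<dots> \<le> capP1 H"
    by (rule capP_le_capP1[OF sep])
  finally show ?thesis .
qed

lemma product_eigenvectors_if_capP1_eq_opnorm_inf:
  fixes H :: "complex^('a::finite \<times> 'b::finite)^('a \<times> 'b)"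
  assumes "hermitian H" "capP1 H = opnorm_inf H"
  shows "contains_product_vector (eigenspace H (E0 H)) \<and>
    contains_product_vector (eigenspace H (Emax H))"
proof -
  obtain pm :: "complex^'a" and qm :: "complex^'b" where m: "norm pm = 1" "norm qm = 1"
    "\<And>p q. quad_form H (tensor_vec pm qm) * ((norm p)^2 * (norm q)^2) \<le> quad_form H (tensor_vec p q)"
    using quad_form_tensor_min_attained[of H] by blast
  obtain pM :: "complex^'a" and qM :: "complex^'b" where M: "norm pM = 1" "norm qM = 1"
    "\<And>p q. quad_form H (tensor_vec p q) \<le> quad_form H (tensor_vec pM qM) * ((norm p)^2 * (norm q)^2)"
    using quad_form_tensor_max_attained[of H] by blast
  have "Emax H - E0 H \<le> quad_form H (tensor_vec pM qM) - quad_form H (tensor_vec pm qm)"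
    using capP1_le[of "quad_form H (tensor_vec pm qm)" "quad_form H (tensor_vec pM qM)" H] m(3) M(3)
      assms(2) by (simp add: opnorm_inf_def product_quad_form_bounds_def)
  moreover have "quad_form H (tensor_vec pM qM) \<le> Emax H"
    using quad_form_le_Emax[OF assms(1), of "tensor_vec pM qM"] M(1,2) by (simp add: norm_tensor_vec)
  moreover have "E0 H \<le> quad_form H (tensor_vec pm qm)"
    using E0_le_quad_form[OF assms(1), of "tensor_vec pm qm"] m(1,2) by (simp add: norm_tensor_vec)
  ultimately have "quad_form H (tensor_vec pm qm) = E0 H * (norm (tensor_vec pm qm))^2"
    "quad_form H (tensor_vec pM qM) = Emax H * (norm (tensor_vec pM qM))^2"
    using m(1,2) M(1,2) by (simp_all add: norm_tensor_vec)
  then have "tensor_vec pm qm \<in> eigenspace H (E0 H)" "tensor_vec pM qM \<in> eigenspace H (Emax H)"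
    by (simp_all add: eigenspace_E0_if_quad_form_eq eigenspace_Emax_if_quad_form_eq assms(1))
  moreover have "pm \<noteq> 0" "qm \<noteq> 0" "pM \<noteq> 0" "qM \<noteq> 0"
    using m(1,2) M(1,2) by auto
  ultimately show ?thesis
    unfolding contains_product_vector_def by blast
qed

theorem mainTheorem2:
  fixes H :: "complex^('a::finite\<times>'b::finite)^('a\<times>'b)"
  assumes "hermitian H"
  shows "capP1 H = opnorm_inf H \<longleftrightarrow>
           (contains_product_vector (eigenspace H (E0 H)) \<and>
            contains_product_vector (eigenspace H (Emax H)))"
proof
  assume "capP1 H = opnorm_inf H"
  with assms show "contains_product_vector (eigenspace H (E0 H)) \<and>
      contains_product_vector (eigenspace H (Emax H))"
    by (rule product_eigenvectors_if_capP1_eq_opnorm_inf)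
next
  assume "contains_product_vector (eigenspace H (E0 H)) \<and>
      contains_product_vector (eigenspace H (Emax H))"
  then obtain a0 b0 a1 b1 where
    "a0 \<noteq> 0" "b0 \<noteq> 0" "tensor_vec a0 b0 \<in> eigenspace H (E0 H)"
    "a1 \<noteq> 0" "b1 \<noteq> 0" "tensor_vec a1 b1 \<in> eigenspace H (Emax H)"
    unfolding contains_product_vector_def by blast
  then have "opnorm_inf H \<le> capP1 H"
    unfolding opnorm_inf_def by (rule eigenvalue_gap_le_capP1)
  with capP1_le_opnorm_inf[OF assms] show "capP1 H = opnorm_inf H"
    by simp
qed

end
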